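(* Let $p>3$ be a prime and $E$ a supersingular elliptic curve over $\mathbb{F}_{p^2}$ whose endomorphism ring corresponds under the Brandt--Sohn correspondence to a ternary quadratic form $F$ of discriminant $p$ (i.e. $\operatorname{End}(E)\cong\operatorname{Clf}^0(F)$). Let $c$ be a prime with $c<3p/16$. Then $F$ properly represents $2c$ if and only if $E$ is $\mathbb{Z}[\sqrt{-cp}]$-oriented or $\mathbb{Z}[\frac{1+\sqrt{-cp}}{2}]$-oriented.
   Context: For an imaginary quadratic order $O$, $E$ is $O$-oriented if there is an injective ring homomorphism $O\hookrightarrow\operatorname{End}(E)$ (for $O=\mathbb{Z}[\sqrt{-cp}]$ or $\mathbb{Z}[\frac{1+\sqrt{-cp}}2]$ this is equivalent to the existence of a $c$-isogeny $E\to E^p$, where $E^p$ is obtained by raising the coefficients of $E$ to the $p$-th power). Write $F(x,y,z)=2ax^2+2by^2+2cz^2+2uyz+2vxz+2wxy$ (integers), with discriminant $4abc+uvw-au^2-bv^2-cw^2$. $\operatorname{Clf}^0(F)=\mathbb{Z}+\mathbb{Z}i+\mathbb{Z}j+\mathbb{Z}k\subset B_{p,\infty}$ with $i^2=ui-bc$, $j^2=vj-ac$, $k^2=wk-ab$, $jk=a(u-i)$, $ki=b(v-j)$, $ij=c(w-k)$; $B_{p,\infty}$ is the quaternion algebra over $\mathbb{Q}$ ramified exactly at $p,\infty$. $F$ properly represents $n$ if $F(v)=n$ for some $v\in\mathbb{Z}^3$ with coprime entries. *)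

theory Defs
  imports Complex_Main "HOL-Computational_Algebra.Primes"
begin

type_synonym tform = "int \<times> int \<times> int \<times> int \<times> int \<times> int"

fun tform_eval :: "tform \<Rightarrow> int \<Rightarrow> int \<Rightarrow> int \<Rightarrow> int" where
  "tform_eval (a,b,c,u,v,w) x y z =
     2*a*x^2 + 2*b*y^2 + 2*c*z^2 + 2*u*y*z + 2*v*x*z + 2*w*x*y"

fun tform_disc :: "tform \<Rightarrow> int" where
  "tform_disc (a,b,c,u,v,w) = 4*a*b*c + u*v*w - a*u^2 - b*v^2 - c*w^2"

definition tform_pos_def :: "tform \<Rightarrow> bool" where
  "tform_pos_def F \<longleftrightarrow> (\<forall>x y z. (x,y,z) \<noteq> (0,0,0) \<longrightarrow> tform_eval F x y z > 0)"

definition properly_represents :: "tform \<Rightarrow> int \<Rightarrow> bool" where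
  "properly_represents F n \<longleftrightarrow>
     (\<exists>x y z. gcd x (gcd y z) = 1 \<and> tform_eval F x y z = n)"

text \<open>The even Clifford algebra Clf^0(F) = Z + Zi + Zj + Zk, elements written as
  coordinate tuples (t0,t1,t2,t3) = t0 + t1 i + t2 j + t3 k, with the multiplication
  determined by i^2 = ui - bc, j^2 = vj - ac, k^2 = wk - ab, jk = a(u-i),
  ki = b(v-j), ij = c(w-k) (and the resulting kj, ik, ji).\<close>

type_synonym clf = "int \<times> int \<times> int \<times> int"

definition clf_one :: clf where "clf_one = (1,0,0,0)"

fun clf_add :: "clf \<Rightarrow> clf \<Rightarrow> clf" where
  "clf_add (x0,x1,x2,x3) (y0,y1,y2,y3) = (x0+y0, x1+y1, x2+y2, x3+y3)"

fun clf_mul :: "tform \<Rightarrow> clf \<Rightarrow> clf \<Rightarrow> clf" where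
  "clf_mul (a,b,c,u,v,w) (x0,x1,x2,x3) (y0,y1,y2,y3) =
    (let
       \<comment> \<open>products of basis elements, as coordinate tuples\<close>
       ii = (-b*c, u, 0, 0); jj = (-a*c, 0, v, 0); kk = (-a*b, 0, 0, w);
       jk = (a*u, -a, 0, 0); ki = (b*v, 0, -b, 0); ij = (c*w, 0, 0, -c);
       kj = (-v*w, a, w, v); ik = (-u*w, w, b, u); ji = (-u*v, v, u, c);
       sc = (\<lambda>s (t0::int,t1::int,t2::int,t3::int). (s*t0, s*t1, s*t2, s*t3))
     in foldr clf_add
       [ (x0*y0, x0*y1 + x1*y0, x0*y2 + x2*y0, x0*y3 + x3*y0),
         sc (x1*y1) ii, sc (x2*y2) jj, sc (x3*y3) kk,
         sc (x2*y3) jk, sc (x3*y1) ki, sc (x1*y2) ij,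
         sc (x3*y2) kj, sc (x1*y3) ik, sc (x2*y1) ji ] (0,0,0,0))"

text \<open>An imaginary quadratic order R (given as a subset of C) is oriented into
  Clf^0(F) (i.e. the curve E with End(E) = Clf^0(F) is R-oriented) iff R is a ring
  and there is an injective unital ring homomorphism R \<hookrightarrow> Clf^0(F).\<close>

definition clf_oriented :: "tform \<Rightarrow> complex set \<Rightarrow> bool" where
  "clf_oriented F R \<longleftrightarrow>
     (1 \<in> R \<and> (\<forall>x\<in>R. \<forall>y\<in>R. x + y \<in> R \<and> x * y \<in> R \<and> - x \<in> R)) \<and>
     (\<exists>f :: complex \<Rightarrow> clf. inj_on f R \<and> f 1 = clf_one \<and>
        (\<forall>x\<in>R. \<forall>y\<in>R. f (x + y) = clf_add (f x) (f y) \<and> f (x * y) = clf_mul F (f x) (f y)))"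

definition order_sqrt :: "nat \<Rightarrow> complex set" where
  "order_sqrt n = {of_int x + of_int y * (\<i> * of_real (sqrt (real n))) | x y. True}"

definition order_half :: "nat \<Rightarrow> complex set" where
  "order_half n = {of_int x + of_int y * ((1 + \<i> * of_real (sqrt (real n))) / 2) | x y. True}"

end

theory Submission
  imports Defs "HOL-Computational_Algebra.Squarefree"
begin

text \<open>
  Let M be the Gram matrix of F, so that F(v) = v^T M v and det M = 2 disc F = 2p. An element
  xi = s + t1 i + t2 j + t3 k of Clf^0(F) satisfies xi^2 = trd(xi) xi - nrd(xi), and its discriminant
  trd(xi)^2 - 4 nrd(xi) equals -t^T adj(M) t. Hence an embedding of an imaginary quadratic order of
  discriminant -d yields an integral t \<noteq> 0 with t^T adj(M) t = d, and conversely such a t with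
  d = 4n yields an embedding of Z[sqrt(-n)].

  If F(v) = 2q, then t = Mv has t^T adj(M) t = 2p F(v) = 4qp. Conversely, if t^T adj(M) t is qp or
  4qp, then p divides adj(M) t (the square of each coordinate of adj(M) t is congruent to
  adj(M)_ii t^T adj(M) t modulo p), and v = adj(M) t / p has F(v) = 2q resp. 8q; in the second case
  Mv = 2t and the odd discriminant force v to be even. As q is squarefree, every representation of
  2q by F is proper.
\<close>

fun tform_gram_mult :: "tform \<Rightarrow> int \<Rightarrow> int \<Rightarrow> int \<Rightarrow> int \<times> int \<times> int" where
  "tform_gram_mult (a,b,c,u,v,w) x y z = (2*a*x + w*y + v*z, w*x + 2*b*y + u*z, v*x + u*y + 2*c*z)"

fun tform_adj_mult :: "tform \<Rightarrow> int \<Rightarrow> int \<Rightarrow> int \<Rightarrow> int \<times> int \<times> int" where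
  "tform_adj_mult (a,b,c,u,v,w) x y z =
     ((4*b*c - u^2)*x + (u*v - 2*c*w)*y + (u*w - 2*b*v)*z,
      (u*v - 2*c*w)*x + (4*a*c - v^2)*y + (v*w - 2*a*u)*z,
      (u*w - 2*b*v)*x + (v*w - 2*a*u)*y + (4*a*b - w^2)*z)"

fun tform_adj :: "tform \<Rightarrow> int \<Rightarrow> int \<Rightarrow> int \<Rightarrow> int" where
  "tform_adj (a,b,c,u,v,w) x y z =
     (4*b*c - u^2)*x^2 + (4*a*c - v^2)*y^2 + (4*a*b - w^2)*z^2
     + 2*(u*v - 2*c*w)*x*y + 2*(v*w - 2*a*u)*y*z + 2*(u*w - 2*b*v)*x*z"

lemma tform_eval_scale: "tform_eval F (k*x) (k*y) (k*z) = k^2 * tform_eval F x y z"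
  by (cases F) (simp add: algebra_simps power2_eq_square)

lemma tform_eval_even: "even (tform_eval F x y z)"
  by (cases F) simp

lemma tform_adj_mult_gram_mult:
  "tform_gram_mult F x y z = (t1,t2,t3) \<Longrightarrow>
   tform_adj_mult F t1 t2 t3 = (2 * tform_disc F * x, 2 * tform_disc F * y, 2 * tform_disc F * z)"
  by (cases F) (clarsimp, simp add: algebra_simps power2_eq_square)

lemma tform_gram_mult_adj_mult:
  "tform_adj_mult F t1 t2 t3 = (x,y,z) \<Longrightarrow>
   tform_gram_mult F x y z = (2 * tform_disc F * t1, 2 * tform_disc F * t2, 2 * tform_disc F * t3)"
  by (cases F) (clarsimp, simp add: algebra_simps power2_eq_square)

lemma tform_adj_gram_mult:
  "tform_gram_mult F x y z = (t1,t2,t3) \<Longrightarrow>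
   tform_adj F t1 t2 t3 = 2 * tform_disc F * tform_eval F x y z"
  by (cases F) (clarsimp, simp add: algebra_simps power2_eq_square)

lemma tform_eval_adj_mult:
  "tform_adj_mult F t1 t2 t3 = (x,y,z) \<Longrightarrow>
   tform_eval F x y z = 2 * tform_disc F * tform_adj F t1 t2 t3"
  by (cases F) (clarsimp, simp add: algebra_simps power2_eq_square)

lemma tform_adj_mult_square:
  assumes "tform_adj_mult (a,b,c,u,v,w) t1 t2 t3 = (x,y,z)"
  shows "x^2 = (4*b*c - u^2) * tform_adj (a,b,c,u,v,w) t1 t2 t3
               - tform_disc (a,b,c,u,v,w) * (4*c*t2^2 - 4*u*t2*t3 + 4*b*t3^2)"
    and "y^2 = (4*a*c - v^2) * tform_adj (a,b,c,u,v,w) t1 t2 t3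
               - tform_disc (a,b,c,u,v,w) * (4*c*t1^2 - 4*v*t1*t3 + 4*a*t3^2)"
    and "z^2 = (4*a*b - w^2) * tform_adj (a,b,c,u,v,w) t1 t2 t3
               - tform_disc (a,b,c,u,v,w) * (4*b*t1^2 - 4*w*t1*t2 + 4*a*t2^2)"
  using assms by (clarsimp, simp add: algebra_simps power2_eq_square)+

lemma tform_adj_mult_square_dvd:
  assumes "tform_adj_mult F t1 t2 t3 = (x,y,z)"
    and "d dvd tform_disc F" and "d dvd tform_adj F t1 t2 t3"
  shows "d dvd x^2 \<and> d dvd y^2 \<and> d dvd z^2"
proof -
  obtain a b c u v w where F: "F = (a,b,c,u,v,w)" by (cases F)
  show ?thesis
    using assms(2,3) unfolding F tform_adj_mult_square[OF assms(1)[unfolded F]]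
    by (blast intro: dvd_diff dvd_mult dvd_mult2)
qed

lemma tform_gram_mult_scale:
  "tform_gram_mult F x y z = (t1,t2,t3) \<Longrightarrow>
   tform_gram_mult F (k*x) (k*y) (k*z) = (k*t1, k*t2, k*t3)"
  by (cases F) (clarsimp, simp add: algebra_simps)

lemma even_coords_of_tform_gram_mult_even:
  assumes "odd (tform_disc F)" and "tform_gram_mult F x y z = (2*t1, 2*t2, 2*t3)"
    and "tform_eval F x y z = 4 * k"
  shows "even x \<and> even y \<and> even z"
proof -
  obtain a b c u v w where F: "F = (a,b,c,u,v,w)" by (cases F)
  define K where "K = a*x^2 + b*y^2 + c*z^2 + u*y*z + v*x*z + w*x*y"
  have "2*a*x + w*y + v*z = 2*t1" "w*x + 2*b*y + u*z = 2*t2" "v*x + u*y + 2*c*z = 2*t3"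
    using assms(2) unfolding F by simp_all
  then have "w*y + v*z = 2*(t1 - a*x)" "w*x + u*z = 2*(t2 - b*y)" "v*x + u*y = 2*(t3 - c*z)"
    by (simp_all add: algebra_simps)
  then have even_mixed: "even (w*y + v*z)" "even (w*x + u*z)" "even (v*x + u*y)"
    by simp_all
  have "tform_eval F x y z = 2 * K"
    unfolding F K_def by (simp add: algebra_simps)
  then have "K = 2 * k"
    using assms(3) by simp
  then have "even K"
    by simp
  then show ?thesis
    using even_mixed assms(1) unfolding F K_def
    by (cases "even x"; cases "even y"; cases "even z"; cases "even u"; cases "even v"; cases "even w";
        auto simp: power2_eq_square)
qed

lemma tform_represents_of_adj_prime_multiple:
  assumes "prime p" and "tform_disc F = int p" and "tform_adj F t1 t2 t3 = int p * m"
  obtains x y z where "tform_eval F x y z = 2 * m" and "tform_gram_mult F x y z = (2*t1, 2*t2, 2*t3)"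
proof -
  obtain W1 W2 W3 where W: "tform_adj_mult F t1 t2 t3 = (W1,W2,W3)"
    by (metis prod_cases3)
  have "int p dvd W1^2 \<and> int p dvd W2^2 \<and> int p dvd W3^2"
    using tform_adj_mult_square_dvd[OF W] assms(2,3) by simp
  moreover have "prime (int p)"
    using assms(1) by simp
  ultimately have "int p dvd W1 \<and> int p dvd W2 \<and> int p dvd W3"
    using prime_dvd_power by blast
  then obtain x y z where xyz: "W1 = int p * x" "W2 = int p * y" "W3 = int p * z"
    by (auto elim!: dvdE)
  have p0: "int p \<noteq> 0"
    using assms(1) by simp
  have "(int p)^2 * tform_eval F x y z = tform_eval F W1 W2 W3"
    unfolding xyz tform_eval_scale ..
  also have "\<dots> = 2 * tform_disc F * tform_adj F t1 t2 t3"
    by (rule tform_eval_adj_mult[OF W])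
  also have "\<dots> = (int p)^2 * (2 * m)"
    using assms(2,3) by (simp add: power2_eq_square)
  finally have eval: "tform_eval F x y z = 2 * m"
    using p0 by simp
  obtain g1 g2 g3 where g: "tform_gram_mult F x y z = (g1,g2,g3)"
    by (metis prod_cases3)
  have "(int p * g1, int p * g2, int p * g3) = tform_gram_mult F W1 W2 W3"
    unfolding xyz using tform_gram_mult_scale[OF g] by simp
  also have "\<dots> = (int p * (2*t1), int p * (2*t2), int p * (2*t3))"
    using tform_gram_mult_adj_mult[OF W] assms(2) by (simp add: algebra_simps)
  finally have "tform_gram_mult F x y z = (2*t1, 2*t2, 2*t3)"
    using p0 g by simp
  with eval show thesis
    using that by blast
qed

lemma tform_represents_of_adj:
  assumes "prime p" and "odd p" and "tform_disc F = int p"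
    and "tform_adj F t1 t2 t3 = int p * m \<or> tform_adj F t1 t2 t3 = int p * (4 * m)"
  shows "\<exists>x y z. tform_eval F x y z = 2 * m"
  using assms(4)
proof
  assume "tform_adj F t1 t2 t3 = int p * m"
  then show ?thesis
    using tform_represents_of_adj_prime_multiple[OF assms(1,3)] by metis
next
  assume "tform_adj F t1 t2 t3 = int p * (4 * m)"
  then obtain x y z where xyz: "tform_eval F x y z = 4 * (2 * m)"
    and g: "tform_gram_mult F x y z = (2*t1, 2*t2, 2*t3)"
    using tform_represents_of_adj_prime_multiple[OF assms(1,3)] by (metis mult.left_commute)
  have "odd (tform_disc F)"
    using assms(2,3) by simp
  then have "even x \<and> even y \<and> even z"
    using even_coords_of_tform_gram_mult_even[OF _ g xyz] by simp
  then obtain x' y' z' where "x = 2 * x'" "y = 2 * y'" "z = 2 * z'"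
    by (auto elim!: evenE)
  with xyz have "tform_eval F x' y' z' = 2 * m"
    using tform_eval_scale[of F 2 x' y' z'] by simp
  then show ?thesis
    by blast
qed

lemma properly_represents_of_squarefree:
  assumes "squarefree m" and "tform_eval F x y z = 2 * m"
  shows "properly_represents F (2 * m)"
proof -
  define g where "g = gcd x (gcd y z)"
  obtain x' y' z' where xyz: "x = g * x'" "y = g * y'" "z = g * z'"
    unfolding g_def by (meson dvd_def dvd_trans gcd_dvd1 gcd_dvd2)
  obtain e where "tform_eval F x' y' z' = 2 * e"
    using tform_eval_even by blast
  with assms(2) have "m = g^2 * e"
    using tform_eval_scale[of F g x' y' z'] unfolding xyz by simp
  then have "g dvd 1"
    using squarefreeD[OF assms(1), of g] by simp
  then have "g = 1"
    unfolding g_def by simp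
  then show ?thesis
    unfolding properly_represents_def g_def using assms(2) by metis
qed

fun clf_trd :: "tform \<Rightarrow> clf \<Rightarrow> int" where
  "clf_trd (a,b,c,u,v,w) (s,t1,t2,t3) = 2*s + u*t1 + v*t2 + w*t3"

fun clf_nrd :: "tform \<Rightarrow> clf \<Rightarrow> int" where
  "clf_nrd (a,b,c,u,v,w) (s,t1,t2,t3) =
     s^2 + s*(u*t1 + v*t2 + w*t3) + b*c*t1^2 + a*c*t2^2 + a*b*t3^2
     + (u*v - c*w)*t1*t2 + (v*w - a*u)*t2*t3 + (u*w - b*v)*t1*t3"

fun clf_line :: "clf \<Rightarrow> int \<Rightarrow> int \<Rightarrow> clf" where
  "clf_line (s,t1,t2,t3) x y = (x + y*s, y*t1, y*t2, y*t3)"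

lemma clf_line_0_1 [simp]: "clf_line \<xi> 0 1 = \<xi>"
  by (cases \<xi>) simp

lemma clf_line_scalar [simp]: "clf_line \<xi> x 0 = (x,0,0,0)"
  by (cases \<xi>) simp

lemma clf_line_inj:
  assumes "snd \<xi> \<noteq> (0,0,0)"
  shows "clf_line \<xi> x y = clf_line \<xi> x' y' \<longleftrightarrow> x = x' \<and> y = y'"
  using assms by (cases \<xi>) auto

lemma clf_add_line:
  "clf_add (clf_line \<xi> x y) (clf_line \<xi> x' y') = clf_line \<xi> (x + x') (y + y')"
  by (cases \<xi>) (simp add: algebra_simps)

lemma clf_mul_line:
  "clf_mul F (clf_line \<xi> x y) (clf_line \<xi> x' y') =
   clf_line \<xi> (x*x' - y*y' * clf_nrd F \<xi>) (x*y' + x'*y + y*y' * clf_trd F \<xi>)"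
  by (cases F, cases \<xi>) (simp add: Let_def algebra_simps power2_eq_square)

lemma clf_mul_self: "clf_mul F \<xi> \<xi> = clf_line \<xi> (- clf_nrd F \<xi>) (clf_trd F \<xi>)"
  using clf_mul_line[of F \<xi> 0 1 0 1] by simp

lemma tform_adj_eq_clf_disc:
  "tform_adj F t1 t2 t3 = 4 * clf_nrd F (s,t1,t2,t3) - clf_trd F (s,t1,t2,t3)^2"
  by (cases F) (simp add: algebra_simps power2_eq_square)

lemma clf_trd_shift: "clf_trd F (s,t1,t2,t3) = 2*s + clf_trd F (0,t1,t2,t3)"
  by (cases F) simp

lemma additive_hom_of_int:
  fixes f :: "complex \<Rightarrow> clf"
  assumes "1 \<in> R" and R: "\<forall>x\<in>R. \<forall>y\<in>R. x + y \<in> R \<and> - x \<in> R"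
    and f1: "f 1 = clf_one" and f_add: "\<forall>x\<in>R. \<forall>y\<in>R. f (x + y) = clf_add (f x) (f y)"
  shows "of_int k \<in> R \<and> f (of_int k) = (k,0,0,0)"
proof (induction k rule: int_induct[where k = 0])
  case base
  have "0 \<in> R"
    using assms(1) R by (metis add.right_inverse)
  moreover obtain a0 a1 a2 a3 where "f 0 = (a0,a1,a2,a3)"
    by (metis prod_cases4)
  moreover have "f (0 + 0) = clf_add (f 0) (f 0)"
    using f_add \<open>0 \<in> R\<close> by blast
  ultimately show ?case
    by simp
next
  case (step1 i)
  then have "of_int i + 1 \<in> R" and "f (of_int i + 1) = clf_add (f (of_int i)) (f 1)"
    using assms(1) R f_add by blast+
  then show ?case
    using step1 f1 by (simp add: clf_one_def)
next
  case (step2 i)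
  then have "of_int i + -1 \<in> R"
    using assms(1) R by blast
  then have "f ((of_int i + -1) + 1) = clf_add (f (of_int i + -1)) (f 1)"
    using assms(1) f_add by blast
  moreover obtain a0 a1 a2 a3 where "f (of_int i + -1) = (a0,a1,a2,a3)"
    by (metis prod_cases4)
  ultimately show ?case
    using \<open>of_int i + -1 \<in> R\<close> step2 f1 by (simp add: clf_one_def)
qed

lemma tform_adj_represents_of_clf_oriented:
  assumes "clf_oriented F R" and "\<omega> \<in> R" and "Im \<omega> \<noteq> 0"
    and "\<omega> * \<omega> = of_int \<tau> * \<omega> - of_int \<nu>"
  shows "\<exists>t1 t2 t3. tform_adj F t1 t2 t3 = 4 * \<nu> - \<tau>^2"
proof -
  obtain f where R: "1 \<in> R" "\<forall>x\<in>R. \<forall>y\<in>R. x + y \<in> R \<and> x * y \<in> R \<and> - x \<in> R"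
    and inj: "inj_on f R" and f1: "f 1 = clf_one"
    and hom: "\<forall>x\<in>R. \<forall>y\<in>R. f (x + y) = clf_add (f x) (f y) \<and> f (x * y) = clf_mul F (f x) (f y)"
    using assms(1) unfolding clf_oriented_def by blast
  have int: "of_int k \<in> R \<and> f (of_int k) = (k,0,0,0)" for k
    by (rule additive_hom_of_int[of R f]) (use R f1 hom in blast)+
  define \<xi> where "\<xi> = f \<omega>"
  obtain s t1 t2 t3 where \<xi>_eq: "\<xi> = (s,t1,t2,t3)"
    by (metis prod_cases4)
  have "snd \<xi> \<noteq> (0,0,0)"
  proof
    assume "snd \<xi> = (0,0,0)"
    then have "f \<omega> = f (of_int s)"
      using \<xi>_eq int unfolding \<xi>_def by simp
    then have "\<omega> = of_int s"
      using inj assms(2) int by (meson inj_onD)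
    with assms(3) show False
      by simp
  qed
  have \<tau>\<omega>: "of_int \<tau> * \<omega> \<in> R" "f (of_int \<tau> * \<omega>) = clf_mul F (\<tau>,0,0,0) \<xi>"
    using hom R(2) int[of \<tau>] assms(2) unfolding \<xi>_def by simp_all
  have "clf_line \<xi> (- clf_nrd F \<xi>) (clf_trd F \<xi>) = f (\<omega> * \<omega>)"
    using hom assms(2) unfolding \<xi>_def by (simp add: clf_mul_self)
  also have "\<dots> = f (of_int \<tau> * \<omega> + of_int (- \<nu>))"
    using assms(4) by simp
  also have "\<dots> = clf_add (f (of_int \<tau> * \<omega>)) (f (of_int (- \<nu>)))"
    using hom \<tau>\<omega>(1) int by blast
  also have "\<dots> = clf_line \<xi> (- \<nu>) \<tau>"
    using \<tau>\<omega>(2) int[of "- \<nu>"] clf_mul_line[of F \<xi> \<tau> 0 0 1] clf_add_line[of \<xi> 0 \<tau> "- \<nu>" 0] by simp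
  finally have "clf_nrd F \<xi> = \<nu> \<and> clf_trd F \<xi> = \<tau>"
    using clf_line_inj[OF \<open>snd \<xi> \<noteq> (0,0,0)\<close>] by simp
  then show ?thesis
    using tform_adj_eq_clf_disc[of F t1 t2 t3 s] unfolding \<xi>_eq by blast
qed

lemma tform_adj_represents_of_order_sqrt:
  assumes "n > 0" and "clf_oriented F (order_sqrt n)"
  shows "\<exists>t1 t2 t3. tform_adj F t1 t2 t3 = 4 * int n"
proof -
  define \<omega> where "\<omega> = \<i> * of_real (sqrt (real n))"
  have "\<omega> \<in> order_sqrt n"
    unfolding order_sqrt_def \<omega>_def by (rule CollectI, rule exI[of _ 0], rule exI[of _ 1]) simp
  moreover have "Im \<omega> \<noteq> 0"
    using assms(1) by (simp add: \<omega>_def)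
  moreover have "\<omega> * \<omega> = of_int 0 * \<omega> - of_int (int n)"
    by (simp add: \<omega>_def complex_eq_iff)
  ultimately have "\<exists>t1 t2 t3. tform_adj F t1 t2 t3 = 4 * int n - 0^2"
    by (rule tform_adj_represents_of_clf_oriented[OF assms(2)])
  then show ?thesis
    by simp
qed

lemma tform_adj_represents_of_order_half:
  assumes "n > 0" and "clf_oriented F (order_half n)"
  shows "\<exists>t1 t2 t3. tform_adj F t1 t2 t3 = int n"
proof -
  define r where "r = sqrt (real n)"
  have "r > 0" and "r * r = real n"
    using assms(1) by (simp_all add: r_def)
  define \<omega> where "\<omega> = (1 + \<i> * of_real r) / 2"
  have R: "order_half n = {of_int x + of_int y * \<omega> | x y. True}"
    unfolding order_half_def \<omega>_def r_def ..
  have "\<omega> \<in> order_half n"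
    unfolding R by (rule CollectI, rule exI[of _ 0], rule exI[of _ 1]) simp
  moreover have "Im \<omega> \<noteq> 0"
    using \<open>r > 0\<close> by (simp add: \<omega>_def)
  \<comment> \<open>Closure of the order under multiplication forces \<open>n \<equiv> 3 (mod 4)\<close>.\<close>
  moreover obtain x y where xy: "\<omega> * \<omega> = of_int x + of_int y * \<omega>"
    using assms(2) \<open>\<omega> \<in> order_half n\<close> unfolding clf_oriented_def R by blast
  have "r / 2 = y * r / 2" and "(1 - r * r) / 4 = x + y / 2"
    using arg_cong[OF xy, of Im] arg_cong[OF xy, of Re] by (simp_all add: \<omega>_def field_simps)
  then have "y = 1" and "4 * x = - 1 - int n"
    using \<open>r > 0\<close> \<open>r * r = real n\<close> by simp_all
  then have "\<omega> * \<omega> = of_int 1 * \<omega> - of_int (- x)"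
    using xy by simp
  ultimately have "\<exists>t1 t2 t3. tform_adj F t1 t2 t3 = 4 * (- x) - 1^2"
    by (rule tform_adj_represents_of_clf_oriented[OF assms(2)])
  with \<open>4 * x = - 1 - int n\<close> show ?thesis
    by simp
qed

lemma clf_oriented_order_sqrt_of_root:
  assumes "n > 0" and "snd \<xi> \<noteq> (0,0,0)" and "clf_trd F \<xi> = 0" and "clf_nrd F \<xi> = int n"
  shows "clf_oriented F (order_sqrt n)"
proof -
  define r where "r = sqrt (real n)"
  have "r > 0"
    using assms(1) by (simp add: r_def)
  define \<omega> where "\<omega> = \<i> * complex_of_real r"
  have R: "order_sqrt n = {of_int x + of_int y * \<omega> | x y. True}"
    unfolding order_sqrt_def \<omega>_def r_def ..
  have "\<omega> * \<omega> = - of_nat n"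
    by (simp add: \<omega>_def r_def complex_eq_iff)
  then have mult: "(of_int x + of_int y * \<omega>) * (of_int x' + of_int y' * \<omega>) =
      of_int (x*x' - y*y' * int n) + of_int (x*y' + x'*y) * \<omega>" for x y x' y'
    by (simp add: algebra_simps) (simp add: mult.assoc[symmetric])
  have add: "(of_int x + of_int y * \<omega>) + (of_int x' + of_int y' * \<omega>) =
      of_int (x + x') + of_int (y + y') * \<omega>" for x y x' y'
    by (simp add: algebra_simps)
  have one: "1 = of_int 1 + of_int 0 * \<omega>"
    by simp
  define f where "f z = clf_line \<xi> \<lfloor>Re z\<rfloor> \<lfloor>Im z / r\<rfloor>" for z
  have f_coord: "f (of_int x + of_int y * \<omega>) = clf_line \<xi> x y" for x y
    unfolding f_def \<omega>_def using \<open>r > 0\<close> by simp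
  have neg: "- (of_int x + of_int y * \<omega>) = of_int (- x) + of_int (- y) * \<omega>" for x y
    by simp
  have "1 \<in> order_sqrt n \<and> (\<forall>z\<in>order_sqrt n. \<forall>z'\<in>order_sqrt n.
          z + z' \<in> order_sqrt n \<and> z * z' \<in> order_sqrt n \<and> - z \<in> order_sqrt n)"
    unfolding R using one add mult neg by blast
  moreover have "inj_on f (order_sqrt n)"
    using clf_line_inj[OF assms(2)] unfolding R by (auto intro!: inj_onI simp: f_coord)
  moreover have "f 1 = clf_one"
    unfolding one f_coord by (simp add: clf_one_def)
  moreover have "f (z + z') = clf_add (f z) (f z') \<and> f (z * z') = clf_mul F (f z) (f z')"
    if "z \<in> order_sqrt n" and "z' \<in> order_sqrt n" for z z'
  proof -
    obtain x y x' y' where z: "z = of_int x + of_int y * \<omega>" and z': "z' = of_int x' + of_int y' * \<omega>"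
      using \<open>z \<in> order_sqrt n\<close> \<open>z' \<in> order_sqrt n\<close> unfolding R by blast
    show ?thesis
      unfolding z z' add mult f_coord clf_add_line clf_mul_line assms(3,4) by simp
  qed
  ultimately show ?thesis
    unfolding clf_oriented_def by blast
qed

lemma clf_oriented_order_sqrt_of_adj:
  assumes "n > 0" and "(t1,t2,t3) \<noteq> (0,0,0)" and "tform_adj F t1 t2 t3 = 4 * int n"
  shows "clf_oriented F (order_sqrt n)"
proof -
  define T where "T = clf_trd F (0,t1,t2,t3)"
  have "T^2 = 4 * (clf_nrd F (0,t1,t2,t3) - int n)"
    using tform_adj_eq_clf_disc[of F t1 t2 t3 0] assms(3) unfolding T_def by simp
  then have "even (T^2)"
    by simp
  then have "even T"
    by simp
  then obtain h where "T = 2 * h"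
    by blast
  define \<xi> where "\<xi> = (- h, t1, t2, t3)"
  have "clf_trd F \<xi> = 0"
    using clf_trd_shift[of F "- h"] \<open>T = 2 * h\<close> unfolding \<xi>_def T_def by simp
  moreover have "clf_nrd F \<xi> = int n"
    using tform_adj_eq_clf_disc[of F t1 t2 t3 "- h"] assms(3) \<open>clf_trd F \<xi> = 0\<close>
    unfolding \<xi>_def by simp
  ultimately show ?thesis
    using clf_oriented_order_sqrt_of_root[OF assms(1), of \<xi> F] assms(2) unfolding \<xi>_def by simp
qed

lemma clf_oriented_order_sqrt_of_represents:
  assumes "tform_disc F = int p" and "p > 0" and "n > 0" and "tform_eval F x y z = 2 * int n"
  shows "clf_oriented F (order_sqrt (n * p))"
proof -
  obtain t1 t2 t3 where t: "tform_gram_mult F x y z = (t1,t2,t3)"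
    by (metis prod_cases3)
  have "tform_adj F t1 t2 t3 = 4 * int (n * p)"
    using tform_adj_gram_mult[OF t] assms(1,4) by simp
  moreover have "(t1,t2,t3) \<noteq> (0,0,0)"
  proof
    assume "(t1,t2,t3) = (0,0,0)"
    moreover have "tform_adj_mult F 0 0 0 = (0,0,0)"
      by (cases F) simp
    ultimately have "2 * int p * x = 0 \<and> 2 * int p * y = 0 \<and> 2 * int p * z = 0"
      using tform_adj_mult_gram_mult[OF t] assms(1) by simp
    then have "x = 0 \<and> y = 0 \<and> z = 0"
      using assms(2) by simp
    moreover have "tform_eval F 0 0 0 = 0"
      using tform_eval_scale[of F 0 0 0 0] by simp
    ultimately show False
      using assms(3,4) by simp
  qed
  ultimately show ?thesis
    using clf_oriented_order_sqrt_of_adj assms(2,3) by simp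
qed

theorem mainTheorem6:
  fixes p q :: nat and F :: tform
  assumes "prime p" and "p > 3"
    and "tform_pos_def F" and "tform_disc F = int p"
    and "prime q" and "16 * q < 3 * p"
  shows "properly_represents F (2 * int q) \<longleftrightarrow>
         (clf_oriented F (order_sqrt (q * p)) \<or> clf_oriented F (order_half (q * p)))"
proof -
  have "p > 0" and "q > 0" and "odd p"
    using assms(1,2,5) prime_gt_0_nat prime_odd_nat by auto
  show ?thesis
  proof
    assume "properly_represents F (2 * int q)"
    then obtain x y z where "tform_eval F x y z = 2 * int q"
      unfolding properly_represents_def by blast
    then show "clf_oriented F (order_sqrt (q * p)) \<or> clf_oriented F (order_half (q * p))"
      using clf_oriented_order_sqrt_of_represents[OF assms(4) \<open>p > 0\<close> \<open>q > 0\<close>] by blast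
  next
    assume "clf_oriented F (order_sqrt (q * p)) \<or> clf_oriented F (order_half (q * p))"
    then obtain t1 t2 t3 where
      "tform_adj F t1 t2 t3 = int p * int q \<or> tform_adj F t1 t2 t3 = int p * (4 * int q)"
      using tform_adj_represents_of_order_sqrt[of "q * p" F] tform_adj_represents_of_order_half[of "q * p" F]
        \<open>p > 0\<close> \<open>q > 0\<close> by (auto simp: ac_simps)
    then obtain x y z where "tform_eval F x y z = 2 * int q"
      using tform_represents_of_adj[OF assms(1) \<open>odd p\<close> assms(4)] by blast
    moreover have "squarefree (int q)"
      using assms(5) by (simp add: squarefree_prime)
    ultimately show "properly_represents F (2 * int q)"
      using properly_represents_of_squarefree by blast
  qed
qed

end
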